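(* Let $\varepsilon>0$, let $R_1,\dots,R_n:[d]\to\mathcal Y$ be $\varepsilon$-private randomizers with $\mathcal Y$ finite and $d$ even, let $|\vec R|_{\neq}$ be the number of distinct randomizers among them, and suppose $d>4(e^{2\varepsilon}-1)^2\ln(12|\mathcal Y|\cdot|\vec R|_{\neq})$. If $H$ is chosen uniformly at random among subsets of $[d]$ of size $d/2$, then with probability at least $2/3$ over $H$, every randomizer $Q_{H,R_i}$, $i\in[n]$, is $\varepsilon'$-private, where \[ \varepsilon'=(e^{2\varepsilon}-1)\sqrt{\frac{16}{d}\ln\left(12|\mathcal Y|\cdot|\vec R|_{\neq}\right)} . \]
   Context: A randomizer $R:\mathcal X\to\mathcal Y$ is $\varepsilon$-private if for all $x,x'\in\mathcal X$ and all $Y\subseteq\mathcal Y$, $\Pr[R(x)\in Y]\le e^{\varepsilon}\Pr[R(x')\in Y]$. $\mathbf U_H$ is the uniform distribution on $H\subseteq[d]$, $\overline H=[d]\setminus H$, and $R(\mathbf U_H)$ is the distribution of $R(\hat x)$ with $\hat x\sim\mathbf U_H$. For $H\subset[d]$ with $|H|=d/2$ and a randomizer $R:[d]\to\mathcal Y$, $Q_{H,R}:\{\pm1\}\to\mathcal Y$ is the randomizer that on input $+1$ outputs a sample of $R(\mathbf U_H)$ and on input $-1$ outputs a sample of $R(\mathbf U_{\overline H})$. *)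

theory Defs
  imports "HOL-Probability.Probability"
begin

definition dom_d :: "nat \<Rightarrow> nat set" where
  "dom_d d = {1..d}"

definition eps_private :: "'x set \<Rightarrow> ('x \<Rightarrow> 'y pmf) \<Rightarrow> real \<Rightarrow> bool" where
  "eps_private X R \<epsilon> \<longleftrightarrow>
     (\<forall>x\<in>X. \<forall>x'\<in>X. \<forall>Y. measure_pmf.prob (R x) Y \<le> exp \<epsilon> * measure_pmf.prob (R x') Y)"

definition rand_unif :: "('x \<Rightarrow> 'y pmf) \<Rightarrow> 'x set \<Rightarrow> 'y pmf" where
  "rand_unif R H = bind_pmf (pmf_of_set H) R"

definition Q_HR :: "nat \<Rightarrow> nat set \<Rightarrow> (nat \<Rightarrow> 'y pmf) \<Rightarrow> int \<Rightarrow> 'y pmf" where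
  "Q_HR d H R b = (if b = 1 then rand_unif R H else rand_unif R (dom_d d - H))"

definition pm_one :: "int set" where
  "pm_one = {1, -1}"

definition num_distinct :: "nat \<Rightarrow> nat \<Rightarrow> (nat \<Rightarrow> nat \<Rightarrow> 'y pmf) \<Rightarrow> nat" where
  "num_distinct d n Rs = card ((\<lambda>i. restrict (Rs i) (dom_d d)) ` {1..n})"

definition half_subsets :: "nat \<Rightarrow> nat set set" where
  "half_subsets d = {H. H \<subseteq> dom_d d \<and> card H = d div 2}"

end

theory Submission
  imports Defs
begin

text \<open>
  Fix a randomizer \<open>R\<close> and an output \<open>y\<close>, and write \<open>q x\<close> for the probability that \<open>R x\<close>
  outputs \<open>y\<close>. By \<open>\<epsilon>\<close>-privacy the \<open>d\<close> values \<open>q x\<close> lie within a factor \<open>e\<^sup>\<plusminus>\<^sup>\<epsilon>\<close> of their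
  mean, and \<open>Q\<^sub>H\<^sub>,\<^sub>R\<close> outputs \<open>y\<close> with probabilities proportional to the sums of \<open>q\<close> over \<open>H\<close> and
  over its complement. A uniform \<open>d/2\<close>-subset \<open>H\<close> is a sample without replacement, so
  Hoeffding's inequality puts both sums within a factor \<open>1 \<plusminus> t\<close> of half the total, except with
  probability \<open>2 exp (-2 m t\<^sup>2 / (e\<^sup>\<epsilon> - e\<^sup>-\<^sup>\<epsilon>)\<^sup>2)\<close>; the two output probabilities then differ
  by a factor at most \<open>(1 + t) / (1 - t) \<le> e\<^sup>4\<^sup>t\<close>. Hoeffding's inequality without replacement
  follows from the Chernoff method, because summing \<open>exp (l * sum b H)\<close> over all \<open>m\<close>-subsets
  gives an elementary symmetric sum, which Maclaurin's inequality bounds by its value at the mean.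
  A union bound over the outputs and the distinct randomizers, with \<open>t\<close> chosen so that the total
  failure probability is at most \<open>1/6\<close>, gives the theorem.
\<close>

section \<open>Elementary symmetric sums\<close>

definition esym :: "('a \<Rightarrow> real) \<Rightarrow> 'a set \<Rightarrow> nat \<Rightarrow> real" where
  "esym x I k = (\<Sum>S\<in>{S. S \<subseteq> I \<and> card S = k}. \<Prod>i\<in>S. x i)"

lemma esym_0: "finite I \<Longrightarrow> esym x I 0 = 1"
proof -
  assume "finite I"
  then have "{S. S \<subseteq> I \<and> card S = 0} = {{}}"
    by (auto dest: finite_subset)
  then show ?thesis by (simp add: esym_def)
qed

lemma esym_insert_Suc:
  assumes I: "finite I" and a: "a \<notin> I"
  shows "esym x (insert a I) (Suc k) = esym x I (Suc k) + x a * esym x I k"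
proof -
  let ?A = "{S. S \<subseteq> I \<and> card S = Suc k}"
  let ?B = "{S. S \<subseteq> I \<and> card S = k}"
  have split: "{S. S \<subseteq> insert a I \<and> card S = Suc k} = ?A \<union> insert a ` ?B"
  proof (intro equalityI subsetI)
    fix S assume S: "S \<in> {S. S \<subseteq> insert a I \<and> card S = Suc k}"
    then have "finite S" using I by (auto dest: finite_subset)
    show "S \<in> ?A \<union> insert a ` ?B"
    proof (cases "a \<in> S")
      case True
      then have "S = insert a (S - {a})" and "S - {a} \<in> ?B"
        using S \<open>finite S\<close> by auto
      then show ?thesis by blast
    qed (use S in auto)
  qed (use a I in \<open>auto, metis card_insert_disjoint finite_subset subsetD\<close>)
  have inj: "inj_on (insert a) ?B"
  proof (rule inj_onI)
    fix X Y assume "X \<in> ?B" "Y \<in> ?B" "insert a X = insert a Y"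
    moreover have "a \<notin> X" "a \<notin> Y" using calculation a by auto
    ultimately show "X = Y" by (metis Diff_insert_absorb)
  qed
  have "esym x (insert a I) (Suc k) = esym x I (Suc k) + (\<Sum>S\<in>insert a ` ?B. \<Prod>i\<in>S. x i)"
    unfolding esym_def split using I a by (intro sum.union_disjoint) auto
  also have "(\<Sum>S\<in>insert a ` ?B. \<Prod>i\<in>S. x i) = (\<Sum>S\<in>?B. \<Prod>i\<in>insert a S. x i)"
    by (simp add: sum.reindex[OF inj])
  also have "\<dots> = (\<Sum>S\<in>?B. x a * (\<Prod>i\<in>S. x i))"
    using a I by (intro sum.cong refl) (subst prod.insert, auto dest: finite_subset)
  finally show ?thesis by (simp add: esym_def sum_distrib_left)
qed

lemma esym_nonneg: "(\<And>i. i \<in> I \<Longrightarrow> x i \<ge> 0) \<Longrightarrow> esym x I k \<ge> 0"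
  unfolding esym_def by (intro sum_nonneg prod_nonneg) auto

lemma esym_cong: "(\<And>i. i \<in> I \<Longrightarrow> x i = y i) \<Longrightarrow> esym x I k = esym y I k"
  unfolding esym_def by (intro sum.cong refl prod.cong) auto

lemma esym_const:
  fixes c :: real
  assumes "finite I" and "\<And>i. i \<in> I \<Longrightarrow> x i = c"
  shows "esym x I k = (card I choose k) * c ^ k"
proof -
  have "(\<Prod>i\<in>S. x i) = c ^ k" if "S \<subseteq> I" "card S = k" for S
  proof -
    have "(\<Prod>i\<in>S. x i) = (\<Prod>i\<in>S. c)"
      using that assms(2) by (intro prod.cong) auto
    then show ?thesis using that by simp
  qed
  then have "esym x I k = (\<Sum>S\<in>{S. S \<subseteq> I \<and> card S = k}. c ^ k)"
    unfolding esym_def by (intro sum.cong) auto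
  then show ?thesis using n_subsets[OF assms(1)] by simp
qed

lemma esym_insert_insert:
  assumes "finite I" "i \<noteq> j" "i \<notin> I" "j \<notin> I"
  shows "esym x (insert i (insert j I)) k =
    (if k = 0 then 1 else if k = 1 then esym x I 1 + x i + x j
     else esym x I k + (x i + x j) * esym x I (k - 1) + x i * x j * esym x I (k - 2))"
  using assms
  by (cases k; cases "k - 1")
     (auto simp: esym_insert_Suc esym_0 algebra_simps numeral_2_eq_2)

text \<open>Moving \<open>x i\<close> and \<open>x j\<close> towards each other keeps \<open>x i + x j\<close> and increases \<open>x i * x j\<close>;
  as \<open>e\<^sub>k\<close> is affine in both with nonnegative coefficients, this can only increase \<open>e\<^sub>k\<close>.\<close>
lemma esym_le_smoothing:
  fixes x :: "'a \<Rightarrow> real" and \<mu> :: real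
  assumes I: "finite I" and nonneg: "\<And>l. l \<in> I \<Longrightarrow> x l \<ge> 0"
    and ij: "i \<in> I" "j \<in> I" "x i < \<mu>" "\<mu> < x j"
  shows "esym x I k \<le> esym (x(i := \<mu>, j := x i + x j - \<mu>)) I k"
proof -
  define x' where "x' = x(i := \<mu>, j := x i + x j - \<mu>)"
  define I0 where "I0 = I - {i, j}"
  have I_eq: "I = insert i (insert j I0)" and I0: "finite I0" "i \<noteq> j" "i \<notin> I0" "j \<notin> I0"
    using ij I unfolding I0_def by auto
  have "esym x' I0 l = esym x I0 l" for l
    unfolding x'_def using I0 by (intro esym_cong) auto
  moreover have "x' i + x' j = x i + x j"
    using I0(2) by (simp add: x'_def)
  moreover have "x i * x j * esym x I0 (k - 2) \<le> x' i * x' j * esym x I0 (k - 2)"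
  proof (rule mult_right_mono)
    have "x' i * x' j - x i * x j = (\<mu> - x i) * (x j - \<mu>)"
      using I0(2) by (simp add: x'_def algebra_simps)
    also have "\<dots> \<ge> 0"
      using ij by simp
    finally show "x i * x j \<le> x' i * x' j"
      by simp
    show "esym x I0 (k - 2) \<ge> 0"
      using nonneg unfolding I0_def by (intro esym_nonneg) blast
  qed
  ultimately show ?thesis
    unfolding x'_def[symmetric] I_eq
    using esym_insert_insert[OF I0, of x k] esym_insert_insert[OF I0, of x' k] by auto
qed

lemma exists_below_above_mean:
  fixes x :: "'a \<Rightarrow> real" and \<mu> :: real
  assumes I: "finite I" and sum: "sum x I = card I * \<mu>" and "i0 \<in> I" "x i0 \<noteq> \<mu>"
  obtains i j where "i \<in> I" "j \<in> I" "x i < \<mu>" "\<mu> < x j"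
proof -
  have "\<not> (\<forall>i\<in>I. x i \<le> \<mu>)"
  proof
    assume "\<forall>i\<in>I. x i \<le> \<mu>"
    then have "sum x I < (\<Sum>i\<in>I. \<mu>)"
      using assms by (intro sum_strict_mono_ex1) force+
    then show False using sum by simp
  qed
  moreover have "\<not> (\<forall>i\<in>I. \<mu> \<le> x i)"
  proof
    assume "\<forall>i\<in>I. \<mu> \<le> x i"
    then have "(\<Sum>i\<in>I. \<mu>) < sum x I"
      using assms by (intro sum_strict_mono_ex1) force+
    then show False using sum by simp
  qed
  ultimately show ?thesis using that by force
qed

text \<open>The weakest of Maclaurin's inequalities, \<open>e\<^sub>k(x) \<le> binom n k \<cdot> mean(x)\<^sup>k\<close>, by smoothing: each
  step of \<open>esym_le_smoothing\<close> with one value below and one above the mean sets one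
  more value equal to the mean.\<close>
lemma esym_le_binomial_power:
  fixes x :: "'a \<Rightarrow> real" and \<mu> :: real
  assumes I: "finite I"
  shows "(\<And>i. i \<in> I \<Longrightarrow> x i \<ge> 0) \<Longrightarrow> sum x I = card I * \<mu> \<Longrightarrow>
           esym x I k \<le> (card I choose k) * \<mu> ^ k"
proof (induction "card {i\<in>I. x i \<noteq> \<mu>}" arbitrary: x rule: less_induct)
  case less
  show ?case
  proof (cases "\<forall>i\<in>I. x i = \<mu>")
    case True
    then show ?thesis by (simp add: esym_const[OF I])
  next
    case False
    then obtain i j where ij: "i \<in> I" "j \<in> I" "x i < \<mu>" "\<mu> < x j"
      using exists_below_above_mean[OF I less.prems(2)] by blast
    define x' where "x' = x(i := \<mu>, j := x i + x j - \<mu>)"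
    have "esym x I k \<le> esym x' I k"
      unfolding x'_def using I less.prems(1) ij by (rule esym_le_smoothing)
    also have "esym x' I k \<le> (card I choose k) * \<mu> ^ k"
    proof (rule less.hyps)
      have "{l\<in>I. x' l \<noteq> \<mu>} \<subseteq> {l\<in>I. x l \<noteq> \<mu>} - {i}"
        using ij by (auto simp: x'_def)
      then have "card {l\<in>I. x' l \<noteq> \<mu>} \<le> card ({l\<in>I. x l \<noteq> \<mu>} - {i})"
        using I by (intro card_mono) auto
      also have "\<dots> < card {l\<in>I. x l \<noteq> \<mu>}"
        using I ij by (intro card_Diff1_less) auto
      finally show "card {l\<in>I. x' l \<noteq> \<mu>} < card {l\<in>I. x l \<noteq> \<mu>}" .
      have "x i \<ge> 0"
        using less.prems(1) ij(1) .
      then show "x' l \<ge> 0" if "l \<in> I" for l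
        using that less.prems(1)[of l] ij(3,4) unfolding x'_def by auto
      define I0 where "I0 = I - {i, j}"
      have I_eq: "I = insert i (insert j I0)" and I0: "finite I0" "i \<noteq> j" "i \<notin> I0" "j \<notin> I0"
        using ij I unfolding I0_def by auto
      have "sum x' I = x' i + x' j + sum x' I0"
        unfolding I_eq using I0 by simp
      also have "sum x' I0 = sum x I0"
        unfolding x'_def using I0 by (intro sum.cong) auto
      finally show "sum x' I = card I * \<mu>"
        using I0 less.prems(2) unfolding I_eq by (simp add: x'_def)
    qed
    finally show ?thesis .
  qed
qed

lemma esym_le_binomial_mean:
  fixes x :: "'a \<Rightarrow> real"
  assumes "finite I" "I \<noteq> {}" "\<And>i. i \<in> I \<Longrightarrow> x i \<ge> 0"
  shows "esym x I k \<le> (card I choose k) * (sum x I / card I) ^ k"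
proof -
  have "sum x I = card I * (sum x I / card I)"
    using assms(1,2) by simp
  from esym_le_binomial_power[OF assms(1,3) this] show ?thesis .
qed

section \<open>Hoeffding's inequality for sampling without replacement\<close>

lemma Hoeffdings_lemma_pmf_of_set:
  fixes b :: "'a \<Rightarrow> real"
  assumes I: "finite I" "I \<noteq> {}" and range: "\<And>i. i \<in> I \<Longrightarrow> b i \<in> {lo..hi}"
    and sum_0: "sum b I = 0" and l: "l > 0"
  shows "(\<Sum>i\<in>I. exp (l * b i)) / card I \<le> exp (l\<^sup>2 * (hi - lo)\<^sup>2 / 8)"
proof -
  let ?M = "measure_pmf (pmf_of_set I)"
  interpret interval_bounded_random_variable ?M b lo hi
    by unfold_locales (use I range in \<open>auto simp: AE_measure_pmf_iff\<close>)
  have "integral\<^sup>L ?M b = 0"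
    using I sum_0 by (simp add: integral_pmf_of_set)
  then have "(\<integral>\<^sup>+i. exp (l * b i) \<partial>?M) \<le> ennreal (exp (l\<^sup>2 * (hi - lo)\<^sup>2 / 8))"
    by (rule Hoeffdings_lemma_nn_integral_0[OF l])
  also have "(\<integral>\<^sup>+i. exp (l * b i) \<partial>?M) = ennreal ((\<Sum>i\<in>I. exp (l * b i)) / card I)"
    using I by (simp add: nn_integral_pmf_of_set divide_ennreal card_gt_0_iff
                          ennreal_of_nat_eq_real_of_nat sum_nonneg)
  finally show ?thesis
    by simp
qed

lemma card_subsets_sum_ge_le:
  fixes b :: "'a \<Rightarrow> real"
  assumes D: "finite D" "D \<noteq> {}" and range: "\<And>i. i \<in> D \<Longrightarrow> b i \<in> {lo..hi}"
    and sum_0: "sum b D = 0" and "lo < hi" and "t > 0"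
  shows "card {H. H \<subseteq> D \<and> card H = m \<and> m * t \<le> sum b H}
           \<le> (card D choose m) * exp (-2 * m * t\<^sup>2 / (hi - lo)\<^sup>2)"
proof -
  define w where "w = hi - lo"
  define l where "l = 4 * t / w\<^sup>2"
  have w: "w > 0" and l: "l > 0"
    using assms unfolding l_def w_def by simp_all
  let ?U = "{H. H \<subseteq> D \<and> card H = m}"
  let ?B = "{H. H \<subseteq> D \<and> card H = m \<and> m * t \<le> sum b H}"
  have "card ?B * exp (l * (m * t)) \<le> (\<Sum>H\<in>?B. exp (l * sum b H))"
    using l by (intro sum_bounded_below) auto
  also have "\<dots> \<le> (\<Sum>H\<in>?U. exp (l * sum b H))"
    using D by (intro sum_mono2) auto
  also have "\<dots> = esym (\<lambda>i. exp (l * b i)) D m"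
    unfolding esym_def using D
    by (intro sum.cong refl) (auto simp: sum_distrib_left exp_sum dest: finite_subset)
  also have "\<dots> \<le> (card D choose m) * ((\<Sum>i\<in>D. exp (l * b i)) / card D) ^ m"
    using D by (intro esym_le_binomial_mean) auto
  also have "\<dots> \<le> (card D choose m) * exp (l\<^sup>2 * w\<^sup>2 / 8) ^ m"
    by (intro mult_left_mono power_mono Hoeffdings_lemma_pmf_of_set[OF D range sum_0 l, folded w_def])
       (auto intro!: sum_nonneg divide_nonneg_nonneg)
  also have "exp (l\<^sup>2 * w\<^sup>2 / 8) ^ m = exp (m * (l\<^sup>2 * w\<^sup>2 / 8))"
    by (simp flip: exp_of_nat_mult)
  finally have "card ?B \<le> (card D choose m) * exp (m * (l\<^sup>2 * w\<^sup>2 / 8)) / exp (l * (m * t))"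
    by (simp add: pos_le_divide_eq)
  also have "\<dots> = (card D choose m) * exp (m * (l\<^sup>2 * w\<^sup>2 / 8) - l * (m * t))"
    by (simp add: exp_diff)
  also have "m * (l\<^sup>2 * w\<^sup>2 / 8) - l * (m * t) = -2 * real m * t\<^sup>2 / w\<^sup>2"
    using w unfolding l_def by (simp add: field_simps power2_eq_square)
  finally show ?thesis
    unfolding w_def .
qed

lemma private_weight_bounds:
  fixes q :: "'a \<Rightarrow> real"
  assumes "finite D" "x \<in> D" and ratio: "\<And>x x'. x \<in> D \<Longrightarrow> x' \<in> D \<Longrightarrow> q x \<le> exp \<epsilon> * q x'"
  shows "exp (-\<epsilon>) * sum q D \<le> card D * q x" and "card D * q x \<le> exp \<epsilon> * sum q D"
proof -
  have "sum q D \<le> (\<Sum>x'\<in>D. exp \<epsilon> * q x)"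
    using assms by (intro sum_mono) auto
  also have "\<dots> = exp \<epsilon> * (card D * q x)"
    by simp
  finally have "exp (-\<epsilon>) * sum q D \<le> exp (-\<epsilon>) * (exp \<epsilon> * (card D * q x))"
    by simp
  then show "exp (-\<epsilon>) * sum q D \<le> card D * q x"
    by (simp add: exp_minus field_simps)
  have "card D * q x = (\<Sum>x'\<in>D. q x)"
    by simp
  also have "\<dots> \<le> (\<Sum>x'\<in>D. exp \<epsilon> * q x')"
    using assms by (intro sum_mono) auto
  finally show "card D * q x \<le> exp \<epsilon> * sum q D"
    by (simp add: sum_distrib_left)
qed

lemma card_subsets_abs_sum_ge_le:
  fixes b :: "'a \<Rightarrow> real"
  assumes D: "finite D" "D \<noteq> {}" and range: "\<And>i. i \<in> D \<Longrightarrow> b i \<in> {lo..hi}"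
    and sum_0: "sum b D = 0" and "lo < hi" and "t > 0"
  shows "card {H. H \<subseteq> D \<and> card H = m \<and> m * t < \<bar>sum b H\<bar>}
           \<le> 2 * real (card D choose m) * exp (-2 * real m * t\<^sup>2 / (hi - lo)\<^sup>2)"
proof -
  let ?A = "{H. H \<subseteq> D \<and> card H = m \<and> m * t \<le> sum b H}"
  let ?B = "{H. H \<subseteq> D \<and> card H = m \<and> m * t \<le> sum (\<lambda>i. - b i) H}"
  have "{H. H \<subseteq> D \<and> card H = m \<and> m * t < \<bar>sum b H\<bar>} \<subseteq> ?A \<union> ?B"
    by (auto simp: sum_negf abs_less_iff not_le[symmetric])
  then have "card {H. H \<subseteq> D \<and> card H = m \<and> m * t < \<bar>sum b H\<bar>} \<le> card (?A \<union> ?B)"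
    using D by (intro card_mono) auto
  also have "\<dots> \<le> card ?A + card ?B"
    by (rule card_Un_le)
  finally have "card {H. H \<subseteq> D \<and> card H = m \<and> m * t < \<bar>sum b H\<bar>} \<le> real (card ?A) + real (card ?B)"
    by linarith
  moreover have "card ?A \<le> (card D choose m) * exp (-2 * real m * t\<^sup>2 / (hi - lo)\<^sup>2)"
    using assms by (rule card_subsets_sum_ge_le)
  moreover have "card ?B \<le> (card D choose m) * exp (-2 * real m * t\<^sup>2 / (-lo - -hi)\<^sup>2)"
    using assms by (intro card_subsets_sum_ge_le) (auto simp: sum_negf)
  ultimately show ?thesis
    by simp
qed

lemma card_subsets_deviation_le:
  fixes q :: "'a \<Rightarrow> real"
  assumes D: "finite D" and nonneg: "\<And>x. x \<in> D \<Longrightarrow> 0 \<le> q x"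
    and ratio: "\<And>x x'. x \<in> D \<Longrightarrow> x' \<in> D \<Longrightarrow> q x \<le> exp \<epsilon> * q x'"
    and "\<epsilon> > 0" "t > 0"
  shows "card {H. H \<subseteq> D \<and> card H = m \<and> m * t * sum q D < \<bar>card D * sum q H - m * sum q D\<bar>}
           \<le> 2 * real (card D choose m) * exp (-2 * real m * t\<^sup>2 / (exp \<epsilon> - exp (-\<epsilon>))\<^sup>2)"
    (is "real (card ?Dev) \<le> _")
proof (cases "sum q D = 0")
  case True
  then have "q x = 0" if "x \<in> D" for x
    using sum_nonneg_eq_0_iff[OF D] nonneg that by blast
  then have "?Dev = {}"
    using True by (auto intro!: sum.neutral)
  then show ?thesis
    by (simp only: card.empty) simp
next
  case False
  define S where "S = sum q D"
  have S: "S > 0"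
    using False nonneg unfolding S_def by (simp add: order_neq_le_trans sum_nonneg)
  then have "D \<noteq> {}"
    unfolding S_def by auto
  define b where "b x = card D * q x - S" for x
  have "sum b H = card D * sum q H - card H * S" for H
    by (simp add: b_def sum_subtractf sum_distrib_left)
  then have "?Dev = {H. H \<subseteq> D \<and> card H = m \<and> m * (t * S) < \<bar>sum b H\<bar>}"
    unfolding S_def by (auto simp: mult.assoc)
  also have "card \<dots> \<le> 2 * real (card D choose m) * exp (-2 * real m * (t * S)\<^sup>2 /
                            (S * (exp \<epsilon> - 1) - S * (exp (-\<epsilon>) - 1))\<^sup>2)"
  proof (rule card_subsets_abs_sum_ge_le[OF D \<open>D \<noteq> {}\<close>])
    show "b x \<in> {S * (exp (-\<epsilon>) - 1) .. S * (exp \<epsilon> - 1)}" if "x \<in> D" for x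
      using private_weight_bounds[where q = q and \<epsilon> = \<epsilon>, OF D that ratio]
      unfolding b_def S_def by (auto simp: algebra_simps)
    show "sum b D = 0"
      by (simp add: b_def S_def sum_subtractf sum_distrib_left)
    show "S * (exp (-\<epsilon>) - 1) < S * (exp \<epsilon> - 1)" and "t * S > 0"
      using S \<open>\<epsilon> > 0\<close> \<open>t > 0\<close> by simp_all
  qed
  also have "(S * (exp \<epsilon> - 1) - S * (exp (-\<epsilon>) - 1))\<^sup>2 = S\<^sup>2 * (exp \<epsilon> - exp (-\<epsilon>))\<^sup>2"
    by (simp add: algebra_simps power2_eq_square)
  finally show ?thesis
    using S by (simp add: power_mult_distrib mult.assoc)
qed

section \<open>Balanced half-size subsets\<close>

lemma eps_private_iff_pmf_le:
  "eps_private X R \<epsilon> \<longleftrightarrow> (\<forall>x\<in>X. \<forall>x'\<in>X. \<forall>y. pmf (R x) y \<le> exp \<epsilon> * pmf (R x') y)"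
proof
  assume priv: "eps_private X R \<epsilon>"
  show "\<forall>x\<in>X. \<forall>x'\<in>X. \<forall>y. pmf (R x) y \<le> exp \<epsilon> * pmf (R x') y"
  proof (intro ballI allI)
    fix x x' y assume "x \<in> X" "x' \<in> X"
    then have "measure_pmf.prob (R x) {y} \<le> exp \<epsilon> * measure_pmf.prob (R x') {y}"
      using priv unfolding eps_private_def by blast
    then show "pmf (R x) y \<le> exp \<epsilon> * pmf (R x') y"
      by (simp add: measure_pmf_single)
  qed
next
  assume pointwise: "\<forall>x\<in>X. \<forall>x'\<in>X. \<forall>y. pmf (R x) y \<le> exp \<epsilon> * pmf (R x') y"
  show "eps_private X R \<epsilon>"
    unfolding eps_private_def
  proof (intro ballI allI)
    fix x x' Y assume "x \<in> X" "x' \<in> X"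
    have "measure_pmf.prob (R x) Y = infsetsum (pmf (R x)) Y"
      by (rule measure_pmf_conv_infsetsum)
    also have "\<dots> \<le> infsetsum (\<lambda>y. exp \<epsilon> * pmf (R x') y) Y"
      using pointwise \<open>x \<in> X\<close> \<open>x' \<in> X\<close> by (intro infsetsum_mono) auto
    also have "\<dots> = exp \<epsilon> * measure_pmf.prob (R x') Y"
      by (simp add: infsetsum_cmult_right pmf_abs_summable measure_pmf_conv_infsetsum)
    finally show "measure_pmf.prob (R x) Y \<le> exp \<epsilon> * measure_pmf.prob (R x') Y" .
  qed
qed

lemma one_plus_div_one_minus_le_exp:
  fixes t :: real
  assumes "0 \<le> t" "t < 1/2"
  shows "(1 + t) / (1 - t) \<le> exp (4 * t)"
proof -
  have "t * t \<le> 1/2 * (1/2)"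
    using assms by (intro mult_mono) auto
  then have "0 \<le> 2 * t * (1 - 2 * t\<^sup>2)"
    using assms by (simp add: power2_eq_square)
  also have "2 * t * (1 - 2 * t\<^sup>2) = (1 + 2 * t)\<^sup>2 * (1 - t) - (1 + t)"
    by (simp add: algebra_simps power2_eq_square)
  finally have "1 + t \<le> (1 + 2 * t)\<^sup>2 * (1 - t)"
    by simp
  also have "(1 + 2 * t)\<^sup>2 \<le> exp (2 * t) ^ 2"
    using exp_ge_add_one_self[of "2 * t"] assms by (intro power_mono) auto
  also have "exp (2 * t) ^ 2 = exp (4 * t)"
    by (simp flip: exp_of_nat_mult)
  finally show ?thesis
    using assms by (simp add: pos_divide_le_eq)
qed

lemma le_exp_mult_if_abs_diff_le:
  fixes a b t :: real
  assumes close: "\<bar>a - b\<bar> \<le> t * (a + b)" and "0 \<le> b" "0 \<le> t" "t < 1/2"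
  shows "a \<le> exp (4 * t) * b"
proof -
  have "a * (1 - t) \<le> (1 + t) * b"
    using close by (simp add: abs_le_iff algebra_simps)
  then have "a \<le> (1 + t) / (1 - t) * b"
    using assms by (simp add: field_simps)
  also have "\<dots> \<le> exp (4 * t) * b"
    using assms by (intro mult_right_mono one_plus_div_one_minus_le_exp) auto
  finally show ?thesis .
qed

text \<open>\<open>balanced D t R H\<close>: for every output, the average of its probability over the inputs in \<open>H\<close>
  is within relative error \<open>t\<close> of the average over \<open>D\<close> (both sides multiplied by \<open>card D * card H\<close>).\<close>
definition balanced :: "'x set \<Rightarrow> real \<Rightarrow> ('x \<Rightarrow> 'y pmf) \<Rightarrow> 'x set \<Rightarrow> bool" where
  "balanced D t R H \<longleftrightarrow>
     (\<forall>y. \<bar>card D * (\<Sum>x\<in>H. pmf (R x) y) - card H * (\<Sum>x\<in>D. pmf (R x) y)\<bar>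
            \<le> real (card H) * t * (\<Sum>x\<in>D. pmf (R x) y))"

lemma balanced_restrict: "H \<subseteq> D \<Longrightarrow> balanced D t (restrict R D) H \<longleftrightarrow> balanced D t R H"
  unfolding balanced_def by (simp add: subset_iff)

lemma card_not_balanced_le:
  fixes R :: "'x \<Rightarrow> 'y::finite pmf"
  assumes D: "finite D" and priv: "eps_private D R \<epsilon>" and "\<epsilon> > 0" "t > 0"
  shows "card {H. H \<subseteq> D \<and> card H = m \<and> \<not> balanced D t R H}
           \<le> 2 * real CARD('y) * real (card D choose m) * exp (-2 * real m * t\<^sup>2 / (exp \<epsilon> - exp (-\<epsilon>))\<^sup>2)"
proof -
  let ?Dev = "\<lambda>y. {H. H \<subseteq> D \<and> card H = m \<and> m * t * (\<Sum>x\<in>D. pmf (R x) y)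
                  < \<bar>card D * (\<Sum>x\<in>H. pmf (R x) y) - m * (\<Sum>x\<in>D. pmf (R x) y)\<bar>}"
  let ?bound = "2 * real (card D choose m) * exp (-2 * real m * t\<^sup>2 / (exp \<epsilon> - exp (-\<epsilon>))\<^sup>2)"
  have "{H. H \<subseteq> D \<and> card H = m \<and> \<not> balanced D t R H} \<subseteq> (\<Union>y. ?Dev y)"
    unfolding balanced_def by (auto simp: not_le)
  then have "card {H. H \<subseteq> D \<and> card H = m \<and> \<not> balanced D t R H} \<le> card (\<Union>y. ?Dev y)"
    using D by (intro card_mono) auto
  also have "\<dots> \<le> (\<Sum>y\<in>UNIV. card (?Dev y))"
    by (rule card_UN_le) simp
  finally have "card {H. H \<subseteq> D \<and> card H = m \<and> \<not> balanced D t R H} \<le> (\<Sum>y\<in>UNIV. real (card (?Dev y)))"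
    by (simp flip: of_nat_sum)
  also have "\<dots> \<le> CARD('y) * ?bound"
  proof (rule sum_bounded_above)
    fix y :: 'y
    show "card (?Dev y) \<le> ?bound"
      using priv \<open>\<epsilon> > 0\<close> \<open>t > 0\<close> unfolding eps_private_iff_pmf_le
      by (intro card_subsets_deviation_le D) auto
  qed
  finally show ?thesis
    by (simp add: mult.assoc)
qed

lemma half_subsetsD:
  assumes "H \<in> half_subsets d" "even d"
  shows "H \<subseteq> dom_d d" "finite H" "finite (dom_d d - H)"
    and "card H = d div 2" "card (dom_d d - H) = d div 2" "card (dom_d d) = 2 * (d div 2)"
proof -
  show "H \<subseteq> dom_d d" "card H = d div 2"
    using assms(1) by (simp_all add: half_subsets_def)
  moreover show "card (dom_d d) = 2 * (d div 2)" "finite (dom_d d - H)"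
    using assms(2) by (simp_all add: dom_d_def)
  moreover show "finite H"
    using \<open>H \<subseteq> dom_d d\<close> by (rule finite_subset) (simp add: dom_d_def)
  ultimately show "card (dom_d d - H) = d div 2"
    by (simp add: card_Diff_subset)
qed

lemma pmf_Q_HR:
  assumes "H \<in> half_subsets d" "even d" "d > 0"
  shows "pmf (Q_HR d H R a) y = (\<Sum>x\<in>(if a = 1 then H else dom_d d - H). pmf (R x) y) / (d div 2)"
proof -
  have "d div 2 > 0"
    using assms(2,3) by auto
  then have "H \<noteq> {}" "dom_d d - H \<noteq> {}"
    using half_subsetsD[OF assms(1,2)] by auto
  then show ?thesis
    unfolding Q_HR_def rand_unif_def using half_subsetsD[OF assms(1,2)]
    by (simp add: pmf_bind_pmf_of_set)
qed

lemma abs_diff_le_if_balanced: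
  fixes R :: "nat \<Rightarrow> 'y pmf" and y :: 'y
  assumes H: "H \<in> half_subsets d" "even d" "d > 0" and bal: "balanced (dom_d d) t R H"
  defines "A \<equiv> \<Sum>x\<in>H. pmf (R x) y" and "B \<equiv> \<Sum>x\<in>dom_d d - H. pmf (R x) y"
  shows "\<bar>A - B\<bar> \<le> t * (A + B)"
proof -
  define m where "m = d div 2"
  note H' = half_subsetsD[OF H(1,2), folded m_def]
  have "m > 0"
    using H(2,3) unfolding m_def by auto
  have sum_D: "(\<Sum>x\<in>dom_d d. pmf (R x) y) = B + A"
    unfolding A_def B_def using H' by (intro sum.subset_diff) (auto simp: dom_d_def)
  have "card (dom_d d) * A - card H * (\<Sum>x\<in>dom_d d. pmf (R x) y) = m * (A - B)"
    unfolding sum_D H' by (simp add: algebra_simps)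
  then have "m * \<bar>A - B\<bar> = \<bar>card (dom_d d) * A - card H * (\<Sum>x\<in>dom_d d. pmf (R x) y)\<bar>"
    by (simp add: abs_mult)
  also have "\<dots> \<le> card H * t * (\<Sum>x\<in>dom_d d. pmf (R x) y)"
    using bal unfolding balanced_def A_def by blast
  also have "\<dots> = m * (t * (A + B))"
    unfolding sum_D H' by simp
  finally show ?thesis
    using \<open>m > 0\<close> by simp
qed

lemma eps_private_Q_HR_if_balanced:
  assumes H: "H \<in> half_subsets d" "even d" "d > 0"
    and "0 \<le> t" "t < 1/2" and bal: "balanced (dom_d d) t R H"
  shows "eps_private pm_one (Q_HR d H R) (4 * t)"
proof -
  have "pmf (Q_HR d H R a) y \<le> exp (4 * t) * pmf (Q_HR d H R a') y" for a a' y
  proof -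
    let ?A = "\<Sum>x\<in>H. pmf (R x) y" and ?B = "\<Sum>x\<in>dom_d d - H. pmf (R x) y"
    have ratio: "p \<le> exp (4 * t) * p'" if p: "p \<in> {?A, ?B}" "p' \<in> {?A, ?B}" for p p'
    proof (rule le_exp_mult_if_abs_diff_le)
      show "\<bar>p - p'\<bar> \<le> t * (p + p')"
        using p abs_diff_le_if_balanced[OF H bal, of y] \<open>0 \<le> t\<close>
        by (auto simp: abs_minus_commute add.commute sum_nonneg)
    qed (use p assms(4,5) in \<open>auto simp: sum_nonneg\<close>)
    have "(\<Sum>x\<in>(if a = 1 then H else dom_d d - H). pmf (R x) y)
          \<le> exp (4 * t) * (\<Sum>x\<in>(if a' = 1 then H else dom_d d - H). pmf (R x) y)"
      by (rule ratio) auto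
    then show ?thesis
      unfolding pmf_Q_HR[OF H] by (simp add: divide_right_mono)
  qed
  then show ?thesis
    unfolding eps_private_iff_pmf_le by blast
qed

lemma prob_all_balanced_ge:
  fixes Rs :: "'i \<Rightarrow> 'x \<Rightarrow> 'y::finite pmf"
  assumes D: "finite D" "m \<le> card D" and I: "finite I"
    and priv: "\<And>i. i \<in> I \<Longrightarrow> eps_private D (Rs i) \<epsilon>" and "\<epsilon> > 0" "t > 0"
  shows "1 - 2 * real CARD('y) * card ((\<lambda>i. restrict (Rs i) D) ` I)
               * exp (-2 * real m * t\<^sup>2 / (exp \<epsilon> - exp (-\<epsilon>))\<^sup>2)
         \<le> measure_pmf.prob (pmf_of_set {H. H \<subseteq> D \<and> card H = m}) {H. \<forall>i\<in>I. balanced D t (Rs i) H}"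
proof -
  let ?U = "{H. H \<subseteq> D \<and> card H = m}"
  let ?G = "{H. \<forall>i\<in>I. balanced D t (Rs i) H}"
  let ?F = "(\<lambda>i. restrict (Rs i) D) ` I"
  let ?Bad = "\<lambda>f. {H. H \<subseteq> D \<and> card H = m \<and> \<not> balanced D t f H}"
  let ?E = "exp (-2 * real m * t\<^sup>2 / (exp \<epsilon> - exp (-\<epsilon>))\<^sup>2)"
  have U: "finite ?U" "card ?U = card D choose m"
    using D(1) by (simp_all add: n_subsets)
  with D(2) have "card ?U > 0"
    by simp
  then have "?U \<noteq> {}"
    by (simp add: card_gt_0_iff)
  have "measure_pmf.prob (pmf_of_set ?U) ?G = card (?U \<inter> ?G) / card ?U"
    by (rule measure_pmf_of_set[OF \<open>?U \<noteq> {}\<close> U(1)])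
  also have "\<dots> = (card ?U - real (card (?U - ?G))) / card ?U"
    using card_Int_Diff[OF U(1), of ?G] by simp
  also have "\<dots> = 1 - card (?U - ?G) / card ?U"
    using \<open>card ?U > 0\<close> by (simp add: diff_divide_distrib)
  finally have prob: "measure_pmf.prob (pmf_of_set ?U) ?G = 1 - card (?U - ?G) / card ?U" .
  have "?U - ?G \<subseteq> (\<Union>f\<in>?F. ?Bad f)"
    by (auto simp: balanced_restrict)
  then have "card (?U - ?G) \<le> card (\<Union>f\<in>?F. ?Bad f)"
    using D(1) I by (intro card_mono finite_UN_I) (auto intro: rev_finite_subset[of "Pow D"])
  also have "\<dots> \<le> (\<Sum>f\<in>?F. card (?Bad f))"
    using I by (intro card_UN_le) simp
  finally have "card (?U - ?G) \<le> (\<Sum>f\<in>?F. real (card (?Bad f)))"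
    by (simp flip: of_nat_sum)
  also have "\<dots> \<le> card ?F * (2 * real CARD('y) * real (card D choose m) * ?E)"
  proof (rule sum_bounded_above)
    fix f assume "f \<in> ?F"
    then have "eps_private D f \<epsilon>"
      using priv by (auto simp: eps_private_def)
    then show "card (?Bad f) \<le> 2 * real CARD('y) * real (card D choose m) * ?E"
      by (rule card_not_balanced_le[OF D(1) _ \<open>\<epsilon> > 0\<close> \<open>t > 0\<close>])
  qed
  finally have "card (?U - ?G) / card ?U \<le> 2 * real CARD('y) * card ?F * ?E"
    using \<open>card ?U > 0\<close> U(2) by (simp add: pos_divide_le_eq algebra_simps)
  then show ?thesis
    unfolding prob by linarith
qed

lemma exp_minus_exp_neg_le:
  fixes \<epsilon> :: real
  assumes "\<epsilon> \<ge> 0"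
  shows "exp \<epsilon> - exp (-\<epsilon>) \<le> exp (2 * \<epsilon>) - 1"
proof -
  have "exp (2 * \<epsilon>) - 1 = exp \<epsilon> * (exp \<epsilon> - exp (-\<epsilon>))"
    by (simp add: algebra_simps flip: exp_add)
  moreover have "exp \<epsilon> - exp (-\<epsilon>) \<ge> 0"
    using assms by simp
  ultimately show ?thesis
    using assms by (simp add: mult_le_cancel_right1)
qed

lemma privacy_parameter_bounds:
  fixes \<epsilon> N :: real and d :: nat
  assumes "\<epsilon> > 0" "N \<ge> 1" "even d" and d: "real d > 4 * (exp (2 * \<epsilon>) - 1)\<^sup>2 * ln (12 * N)"
  defines "t \<equiv> (exp (2 * \<epsilon>) - 1) * sqrt (ln (12 * N) / d)"
  shows "0 < d" "0 < t" "t < 1/2"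
    and "2 / 3 \<le> 1 - 2 * N * exp (-2 * real (d div 2) * t\<^sup>2 / (exp \<epsilon> - exp (-\<epsilon>))\<^sup>2)"
    and "(exp (2 * \<epsilon>) - 1) * sqrt (16 / real d * ln (12 * N)) = 4 * t"
proof -
  define L where "L = ln (12 * N)"
  define c where "c = exp (2 * \<epsilon>) - 1"
  define w where "w = exp \<epsilon> - exp (-\<epsilon>)"
  have "L > 0" "c > 0" "w > 0"
    using \<open>\<epsilon> > 0\<close> \<open>N \<ge> 1\<close> by (simp_all add: L_def c_def w_def ln_gt_zero)
  have "real d > 0"
    using d \<open>c > 0\<close> \<open>L > 0\<close> unfolding c_def[symmetric] L_def[symmetric]
    by (smt (verit) mult_pos_pos zero_less_power)
  then show "0 < d"
    by simp
  show "0 < t"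
    using \<open>c > 0\<close> \<open>L > 0\<close> \<open>real d > 0\<close> unfolding t_def c_def[symmetric] L_def[symmetric] by simp
  have t2: "t\<^sup>2 = c\<^sup>2 * L / d"
    using \<open>L > 0\<close> \<open>real d > 0\<close> unfolding t_def c_def[symmetric] L_def[symmetric]
    by (simp add: power_mult_distrib)
  then have "t\<^sup>2 < (1/2)\<^sup>2"
    using d \<open>real d > 0\<close> unfolding c_def[symmetric] L_def[symmetric]
    by (simp add: divide_less_eq power2_eq_square)
  then show "t < 1/2"
    by (rule power_less_imp_less_base) simp
  have "w\<^sup>2 \<le> c\<^sup>2"
    unfolding c_def w_def using \<open>\<epsilon> > 0\<close> \<open>w > 0\<close>[unfolded w_def]
    by (intro power_mono exp_minus_exp_neg_le) auto
  then have "L * w\<^sup>2 \<le> c\<^sup>2 * L"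
    using \<open>L > 0\<close> by (simp add: mult.commute)
  moreover have "2 * real (d div 2) * t\<^sup>2 = c\<^sup>2 * L"
    using \<open>even d\<close> \<open>real d > 0\<close> t2 by (simp add: real_of_nat_div)
  ultimately have "-2 * real (d div 2) * t\<^sup>2 / w\<^sup>2 \<le> -L"
    using \<open>w > 0\<close> by (simp add: field_simps)
  then have "2 * N * exp (-2 * real (d div 2) * t\<^sup>2 / w\<^sup>2) \<le> 2 * N * exp (-L)"
    using \<open>N \<ge> 1\<close> by simp
  also have "2 * N * exp (-L) = 1 / 6"
    using \<open>N \<ge> 1\<close> by (simp add: L_def exp_minus)
  finally show "2 / 3 \<le> 1 - 2 * N * exp (-2 * real (d div 2) * t\<^sup>2 / (exp \<epsilon> - exp (-\<epsilon>))\<^sup>2)"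
    unfolding w_def by simp
  have "sqrt (16 / real d * L) = sqrt (4\<^sup>2 * (L / d))"
    by simp
  also have "\<dots> = 4 * sqrt (L / d)"
    by (simp only: real_sqrt_mult real_sqrt_abs)
  finally show "(exp (2 * \<epsilon>) - 1) * sqrt (16 / real d * ln (12 * N)) = 4 * t"
    unfolding t_def L_def by simp
qed

lemma set_pmf_of_half_subsets: "set_pmf (pmf_of_set (half_subsets d)) = half_subsets d"
proof (rule set_pmf_of_set)
  have "{1..d div 2} \<in> half_subsets d"
    by (auto simp: half_subsets_def dom_d_def)
  then show "half_subsets d \<noteq> {}"
    by blast
  show "finite (half_subsets d)"
    by (rule finite_subset[of _ "Pow (dom_d d)"]) (auto simp: half_subsets_def dom_d_def)
qed

theorem mainTheorem6:
  fixes \<epsilon> :: real and d n :: nat and Rs :: "nat \<Rightarrow> nat \<Rightarrow> ('y::finite) pmf"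
  assumes "\<epsilon> > 0"
    and "even d"
    and "\<And>i. i \<in> {1..n} \<Longrightarrow> eps_private (dom_d d) (Rs i) \<epsilon>"
    and "real d > 4 * (exp (2 * \<epsilon>) - 1)^2 * ln (12 * real CARD('y) * real (num_distinct d n Rs))"
  shows "measure_pmf.prob (pmf_of_set (half_subsets d))
           {H. \<forall>i\<in>{1..n}. eps_private pm_one (Q_HR d H (Rs i))
                ((exp (2 * \<epsilon>) - 1) * sqrt (16 / real d * ln (12 * real CARD('y) * real (num_distinct d n Rs))))}
         \<ge> 2 / 3"
proof (cases "n = 0")
  case False
  define N where "N = real CARD('y) * real (num_distinct d n Rs)"
  define t where "t = (exp (2 * \<epsilon>) - 1) * sqrt (ln (12 * N) / d)"
  have "num_distinct d n Rs \<ge> 1" "CARD('y) \<ge> 1"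
    using False finite_UNIV_card_ge_0[where 'a = 'y]
    by (simp_all add: num_distinct_def Suc_le_eq card_gt_0_iff)
  then have "1 * 1 \<le> N"
    unfolding N_def by (intro mult_mono) auto
  then have "N \<ge> 1"
    by simp
  have N: "12 * real CARD('y) * real (num_distinct d n Rs) = 12 * N"
    by (simp add: N_def)
  note t = privacy_parameter_bounds[OF \<open>\<epsilon> > 0\<close> \<open>N \<ge> 1\<close> \<open>even d\<close> assms(4)[unfolded N], folded t_def]
  have "2 / 3 \<le> 1 - 2 * N * exp (-2 * real (d div 2) * t\<^sup>2 / (exp \<epsilon> - exp (-\<epsilon>))\<^sup>2)"
    by (rule t(4))
  also have "\<dots> \<le> measure_pmf.prob (pmf_of_set (half_subsets d)) {H. \<forall>i\<in>{1..n}. balanced (dom_d d) t (Rs i) H}"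
    using prob_all_balanced_ge[where D = "dom_d d" and m = "d div 2" and I = "{1..n}" and Rs = Rs,
                               OF _ _ _ assms(3) \<open>\<epsilon> > 0\<close> t(2)]
    unfolding half_subsets_def N_def num_distinct_def by (simp add: dom_d_def mult.assoc)
  also have "\<dots> \<le> measure_pmf.prob (pmf_of_set (half_subsets d))
                    {H. \<forall>i\<in>{1..n}. eps_private pm_one (Q_HR d H (Rs i)) (4 * t)}"
    using eps_private_Q_HR_if_balanced[OF _ \<open>even d\<close> t(1) _ t(3)] t(2)
    by (intro measure_pmf.finite_measure_mono_AE) (auto simp: AE_measure_pmf_iff set_pmf_of_half_subsets)
  finally show ?thesis
    unfolding N t(5) .
qed simp

end
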